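(* Fix $l,r>0$, $0<\alpha<\beta<1$ and diffusion constants $D_1,D_2>0$, let $\delta=\frac{D_2-D_1}{D_2+D_1}$, and for each $Q_0\in\mathbb{R}$ let $A(Q_0,\delta)\in(0,A_M)$ be the unique solution $A$ of $G_2(Q_0,A,\delta)=0$. (a) If $D_1<D_2$ (i.e. $\delta>0$), then there exists $Q_0^-<0$ such that $\partial_{Q_0}A(Q_0,\delta)$ has the same sign as $l-r$ when $Q_0>Q_0^-$, and the opposite sign when $Q_0<Q_0^-$. (b) If $D_1>D_2$ (i.e. $\delta<0$), then there exists $Q_0^+>0$ such that $\partial_{Q_0}A(Q_0,\delta)$ has the sign opposite to that of $l-r$ when $Q_0<Q_0^+$, and the same sign as $l-r$ when $Q_0>Q_0^+$.
   Context: Setting: reduction of the steady zero-current Poisson–Nernst–Planck problem for two ion species with valences $\pm1$; $l,r>0$ are boundary concentrations, the permanent charge is $2Q_0$ on $(a,b)$ and $0$ elsewhere in $(0,1)$, $\alpha=H(a)/H(1)$, $\beta=H(b)/H(1)$ with $H(x)=\int_0^x ds/h(s)$ and $h>0$ the cross-sectional area, so $0<\alpha<\beta<1$. For $Q_0\in\mathbb{R}$, $A>0$ define $B=\frac{1-\beta}{\alpha}(l-A)+r$, $A_M=l+\frac{\alpha}{1-\beta}r$, $S_a=\sqrt{Q_0^2+A^2}$, $S_b=\sqrt{Q_0^2+B^2}$, $N=A-l+S_a-S_b$, and $G_2(Q_0,A,\delta)=\delta Q_0\ln\frac{S_a+\delta Q_0}{S_b+\delta Q_0}-N$. It is known that for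 each $Q_0$ there is a unique $A=A(Q_0,\delta)\in(0,A_M)$ with $G_2(Q_0,A,\delta)=0$, depending differentiably on $Q_0$; $A$ is the geometric mean $\sqrt{c_1(a)c_2(a)}$ of the two concentrations at $x=a$. *)

theory Defs
  imports "HOL-Analysis.Analysis"
begin

text \<open>Zero-current PNP reduction. Parameters: boundary concentrations l r,
  alpha = H(a)/H(1), beta = H(b)/H(1).\<close>

definition Bpnp :: "real \<Rightarrow> real \<Rightarrow> real \<Rightarrow> real \<Rightarrow> real \<Rightarrow> real" where
  "Bpnp l r \<alpha> \<beta> A = (1 - \<beta>) / \<alpha> * (l - A) + r"

definition AMpnp :: "real \<Rightarrow> real \<Rightarrow> real \<Rightarrow> real \<Rightarrow> real" where
  "AMpnp l r \<alpha> \<beta> = l + \<alpha> / (1 - \<beta>) * r"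

definition Sa :: "real \<Rightarrow> real \<Rightarrow> real" where
  "Sa Q0 A = sqrt (Q0\<^sup>2 + A\<^sup>2)"

definition Sb :: "real \<Rightarrow> real \<Rightarrow> real \<Rightarrow> real \<Rightarrow> real \<Rightarrow> real \<Rightarrow> real" where
  "Sb l r \<alpha> \<beta> Q0 A = sqrt (Q0\<^sup>2 + (Bpnp l r \<alpha> \<beta> A)\<^sup>2)"

definition Npnp :: "real \<Rightarrow> real \<Rightarrow> real \<Rightarrow> real \<Rightarrow> real \<Rightarrow> real \<Rightarrow> real" where
  "Npnp l r \<alpha> \<beta> Q0 A = A - l + Sa Q0 A - Sb l r \<alpha> \<beta> Q0 A"

definition G2 :: "real \<Rightarrow> real \<Rightarrow> real \<Rightarrow> real \<Rightarrow> real \<Rightarrow> real \<Rightarrow> real \<Rightarrow> real" where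
  "G2 l r \<alpha> \<beta> Q0 A \<delta> =
     \<delta> * Q0 * ln ((Sa Q0 A + \<delta> * Q0) / (Sb l r \<alpha> \<beta> Q0 A + \<delta> * Q0))
     - Npnp l r \<alpha> \<beta> Q0 A"

definition Asol :: "real \<Rightarrow> real \<Rightarrow> real \<Rightarrow> real \<Rightarrow> real \<Rightarrow> real \<Rightarrow> real" where
  "Asol l r \<alpha> \<beta> Q0 \<delta> =
     (THE A. 0 < A \<and> A < AMpnp l r \<alpha> \<beta> \<and> G2 l r \<alpha> \<beta> Q0 A \<delta> = 0)"

end

(*
  With phi Q x = Sa Q x - \<delta> Q ln (Sa Q x + \<delta> Q) the zero-current equation reads
  A - l + phi Q A - phi Q (B A) = 0. Since phi Q is increasing in x, the left side increases in A
  with slope at least 1, so the root A(Q) exists, is unique, and by the implicit function theorem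
  A' = - F_Q / F_a with F_a > 0 and F_Q = psi Q A - psi Q (B A), psi the Q-derivative of phi.
  As sgn (A - B A) = sgn (l - r), the sign of A' is - sgn (l - r) times the sign of
  V Q = psi Q (max A (B A)) - psi Q (min A (B A)).

  For \<delta> > 0, psi Q is decreasing in x when Q \<ge> 0 and increasing on the relevant range when Q is
  very negative, so V changes sign on (-\<infinity>, 0). At a zero of V we have A' = 0, and Euler's
  relation Q psi_Q + x psi_x = - \<delta> turns the sign change of psi_x between min and max into
  V' < 0. Hence every zero of V is a down-crossing and V changes sign exactly once, at Q0^- < 0.
  The case \<delta> < 0 follows from the symmetry A(-Q, -\<delta>) = A(Q, \<delta>).
*)

theory Submission
  imports Defs
begin

lemma has_real_derivative_graph:
  fixes f :: "real \<Rightarrow> real \<Rightarrow> real"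
  assumes f: "((\<lambda>p. f (fst p) (snd p)) has_derivative (\<lambda>h. a * fst h + b * snd h)) (at (x, g x))"
    and g: "(g has_real_derivative g') (at x)"
  shows "((\<lambda>t. f t (g t)) has_real_derivative a + b * g') (at x)"
proof -
  have "((\<lambda>t. (t, g t)) has_derivative (\<lambda>h. (h, h * g'))) (at x)"
    using has_derivative_Pair[OF has_derivative_ident g[unfolded has_field_derivative_def]]
    by (simp add: mult.commute)
  from has_derivative_compose[OF this f]
  have "((\<lambda>t. f t (g t)) has_derivative (\<lambda>h. a * h + b * (h * g'))) (at x)"
    by simp
  then show ?thesis
    unfolding has_field_derivative_def
    by (rule has_derivative_eq_rhs) (simp add: fun_eq_iff algebra_simps)
qed

lemma has_real_derivative_partial2:
  fixes f :: "real \<Rightarrow> real \<Rightarrow> real"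
  assumes "((\<lambda>p. f (fst p) (snd p)) has_derivative (\<lambda>h. a * fst h + b * snd h)) (at (x, y))"
  shows "(f x has_real_derivative b) (at y)"
proof -
  have "((\<lambda>t. (x, t)) has_derivative (\<lambda>h. (0, h))) (at y)"
    by (intro derivative_intros)
  from has_derivative_compose[OF this assms]
  have "(f x has_derivative (\<lambda>h. b * h)) (at y)"
    by simp
  then show ?thesis
    by (simp add: has_field_derivative_def)
qed

text \<open>A continuous family of roots \<open>G q z\<close> of \<open>F q a = z\<close> is differentiable in \<open>q\<close>:
  \<open>(q, z) \<mapsto> (q, G q z)\<close> inverts \<open>(q, a) \<mapsto> (q, F q a)\<close>, whose derivative is invertible.\<close>

lemma implicit_function_has_real_derivative:
  fixes F G :: "real \<Rightarrow> real \<Rightarrow> real"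
  assumes T: "open T" "y \<in> T"
    and solves: "\<And>q z. z \<in> T \<Longrightarrow> F q (G q z) = z"
    and G_cont: "continuous (at (x, y)) (\<lambda>p. G (fst p) (snd p))"
    and F_deriv: "((\<lambda>p. F (fst p) (snd p)) has_derivative (\<lambda>h. a * fst h + b * snd h)) (at (x, G x y))"
    and "b \<noteq> 0"
  shows "((\<lambda>q. G q y) has_real_derivative - a / b) (at x)"
proof -
  define g where "g = (\<lambda>p. (fst p, G (fst p) (snd p)))"
  define g' where "g' = (\<lambda>h. (fst h, (snd h - a * fst h) / b))"
  have "((\<lambda>p. (fst p, F (fst p) (snd p))) has_derivative (\<lambda>h. (fst h, a * fst h + b * snd h))) (at (g (x, y)))"
    unfolding g_def using F_deriv by (auto intro!: derivative_eq_intros)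
  moreover have "bounded_linear g'"
    unfolding g'_def linear_conv_bounded_linear[symmetric]
    by (rule linearI) (auto simp: algebra_simps diff_divide_distrib add_divide_distrib)
  moreover have "g' \<circ> (\<lambda>h. (fst h, a * fst h + b * snd h)) = id"
    unfolding g'_def using \<open>b \<noteq> 0\<close> by (auto simp: fun_eq_iff)
  moreover have "continuous (at (x, y)) g"
    unfolding g_def using G_cont by (intro continuous_intros)
  moreover have "open (UNIV \<times> T)" "(x, y) \<in> UNIV \<times> T"
    using T by (auto intro: open_Times)
  moreover have "(fst (g p), F (fst (g p)) (snd (g p))) = p" if "p \<in> UNIV \<times> T" for p
    using that solves unfolding g_def by (auto simp: prod_eq_iff)
  ultimately have g_deriv: "(g has_derivative g') (at (x, y))"
    by (rule has_derivative_inverse_basic)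
  have "((\<lambda>q. (q, y)) has_derivative (\<lambda>h. (h, 0))) (at x)"
    by (intro derivative_intros)
  from has_derivative_snd[OF has_derivative_compose[OF this g_deriv]]
  have "((\<lambda>q. snd (g (q, y))) has_derivative (\<lambda>h. snd (g' (h, 0)))) (at x)" .
  then have "((\<lambda>q. G q y) has_derivative (\<lambda>h. - (a * h / b))) (at x)"
    unfolding g_def g'_def by simp
  then show ?thesis
    unfolding has_field_derivative_def
    by (rule has_derivative_eq_rhs) (simp add: fun_eq_iff)
qed

lemma neg_if_zeros_have_neg_deriv:
  fixes f :: "real \<Rightarrow> real"
  assumes cont: "continuous_on {p..q} f" and "f p < 0"
    and down: "\<And>x. x \<in> {p..q} \<Longrightarrow> f x = 0 \<Longrightarrow> \<exists>D<0. (f has_real_derivative D) (at x)"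
    and x: "x \<in> {p..q}"
  shows "f x < 0"
proof (rule ccontr)
  assume "\<not> f x < 0"
  define S where "S = {t \<in> {p..q}. 0 \<le> f t}"
  have "closed S"
    unfolding S_def by (rule continuous_on_closed_Collect_le[OF continuous_on_const cont]) simp
  moreover have "x \<in> S" "bdd_below S"
    using x \<open>\<not> f x < 0\<close> unfolding S_def by auto
  ultimately have "Inf S \<in> S"
    using closed_contains_Inf by blast
  define y where "y = Inf S"
  have y: "y \<in> {p..q}" "0 \<le> f y"
    using \<open>Inf S \<in> S\<close> unfolding y_def S_def by auto
  have first: "f t < 0" if "t \<in> {p..q}" "t < y" for t
  proof (rule ccontr)
    assume "\<not> f t < 0"
    then have "y \<le> t"
      unfolding y_def using that \<open>bdd_below S\<close> by (intro cInf_lower) (auto simp: S_def)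
    with that show False
      by simp
  qed
  have "p < y"
    using y \<open>f p < 0\<close> by (cases "p = y") auto
  have "f y = 0"
  proof (rule ccontr)
    assume "f y \<noteq> 0"
    obtain c where "p \<le> c" "c \<le> y" "f c = 0"
      using IVT'[of f p 0 y] \<open>f p < 0\<close> y \<open>p < y\<close> continuous_on_subset[OF cont] by force
    then show False
      using first[of c] \<open>f y \<noteq> 0\<close> y by (cases "c = y") auto
  qed
  then obtain D where "D < 0" "(f has_real_derivative D) (at y)"
    using down y by blast
  then obtain d where "d > 0" and left_larger: "\<And>h. 0 < h \<Longrightarrow> h < d \<Longrightarrow> f y < f (y - h)"
    using DERIV_neg_dec_left by blast
  obtain h where "0 < h" "h < d" "h < y - p"
    using field_lbound_gt_zero[of d "y - p"] \<open>d > 0\<close> \<open>p < y\<close> by auto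
  then have "f y < f (y - h)" and "f (y - h) < 0"
    using left_larger first y by auto
  then show False
    using \<open>f y = 0\<close> by simp
qed

lemma neg_right_of_down_crossing:
  fixes f :: "real \<Rightarrow> real"
  assumes cont: "continuous_on UNIV f"
    and down: "\<And>x. f x = 0 \<Longrightarrow> \<exists>D<0. (f has_real_derivative D) (at x)"
    and "f z = 0" "z < x"
  shows "f x < 0"
proof -
  obtain D where "D < 0" "(f has_real_derivative D) (at z)"
    using down \<open>f z = 0\<close> by blast
  then obtain d where "d > 0" and right_smaller: "\<And>h. 0 < h \<Longrightarrow> h < d \<Longrightarrow> f (z + h) < f z"
    using DERIV_neg_dec_right by blast
  obtain h where "0 < h" "h < d" "h < x - z"
    using field_lbound_gt_zero[of d "x - z"] \<open>d > 0\<close> \<open>z < x\<close> by auto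
  then have "f (z + h) < 0"
    using right_smaller \<open>f z = 0\<close> by fastforce
  then show ?thesis
    using neg_if_zeros_have_neg_deriv[of "z + h" x f] continuous_on_subset[OF cont] down \<open>h < x - z\<close>
    by auto
qed

text \<open>Reflect: the zeros of \<open>\<lambda>t. - f (- t)\<close> are again down-crossings.\<close>

lemma pos_left_of_down_crossing:
  fixes f :: "real \<Rightarrow> real"
  assumes cont: "continuous_on UNIV f"
    and down: "\<And>x. f x = 0 \<Longrightarrow> \<exists>D<0. (f has_real_derivative D) (at x)"
    and "f z = 0" "x < z"
  shows "f x > 0"
proof -
  have "continuous_on UNIV (\<lambda>t. - f (- t))"
    by (intro continuous_intros continuous_on_compose2[OF cont]) auto
  moreover have "\<exists>D<0. ((\<lambda>t. - f (- t)) has_real_derivative D) (at t)" if zero: "- f (- t) = 0" for t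
  proof -
    obtain D where "D < 0" "(f has_real_derivative D) (at (- t))"
      using down[of "- t"] zero by auto
    then have "((\<lambda>t. - f (- t)) has_real_derivative D) (at t)"
      by (auto intro!: derivative_eq_intros DERIV_chain2[where f = f])
    then show ?thesis
      using \<open>D < 0\<close> by blast
  qed
  ultimately have "- f (- (- x)) < 0"
    using neg_right_of_down_crossing[of "\<lambda>t. - f (- t)" "- z" "- x"] \<open>f z = 0\<close> \<open>x < z\<close> by auto
  then show ?thesis
    by simp
qed

lemma sign_change_unique:
  fixes f :: "real \<Rightarrow> real"
  assumes cont: "continuous_on UNIV f"
    and down: "\<And>x. f x = 0 \<Longrightarrow> \<exists>D<0. (f has_real_derivative D) (at x)"
    and "a < b" "f a > 0" "f b < 0"
  shows "\<exists>z\<in>{a<..<b}. \<forall>x. (z < x \<longrightarrow> f x < 0) \<and> (x < z \<longrightarrow> f x > 0)"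
proof -
  obtain z where "a \<le> z" "z \<le> b" "f z = 0"
    using IVT2'[of f b 0 a] assms continuous_on_subset[OF cont] by force
  then have "z \<in> {a<..<b}"
    using assms by (auto simp: less_le)
  then show ?thesis
    using neg_right_of_down_crossing[OF cont down] pos_left_of_down_crossing[OF cont down] \<open>f z = 0\<close>
    by blast
qed

lemma sgn_add_scaled_same_sign:
  fixes u v c :: real
  assumes "c > 0" "sgn v = sgn u"
  shows "sgn (c * u + v) = sgn u"
proof (cases u "0::real" rule: linorder_cases)
  case less
  then have "c * u < 0" "v < 0"
    using assms by (auto simp: mult_pos_neg sgn_real_def split: if_splits)
  then show ?thesis
    using less by simp
next
  case greater
  then have "c * u > 0" "v > 0"
    using assms by (auto simp: sgn_real_def split: if_splits)
  then show ?thesis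
    using greater by simp
qed (use assms in simp)

lemma Asol_reflect: "Asol l r \<alpha> \<beta> (- Q) (- \<delta>) = Asol l r \<alpha> \<beta> Q \<delta>"
  by (simp add: Asol_def G2_def Npnp_def Sa_def Sb_def)

locale pnp_delta =
  fixes \<delta> :: real
  assumes delta_bound: "\<bar>\<delta>\<bar> < 1"
begin

definition U :: "real \<Rightarrow> real \<Rightarrow> real" where
  "U Q x = Sa Q x + \<delta> * Q"

definition phi :: "real \<Rightarrow> real \<Rightarrow> real" where
  "phi Q x = Sa Q x - \<delta> * Q * ln (U Q x)"

definition psi :: "real \<Rightarrow> real \<Rightarrow> real" where
  "psi Q x = (1 - \<delta>\<^sup>2) * Q / U Q x - \<delta> * ln (U Q x)"

definition psi_Q :: "real \<Rightarrow> real \<Rightarrow> real" where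
  "psi_Q Q x = (1 - \<delta>\<^sup>2) / U Q x - (Q + \<delta> * Sa Q x)\<^sup>2 / (Sa Q x * (U Q x)\<^sup>2)"

definition psi_x :: "real \<Rightarrow> real \<Rightarrow> real" where
  "psi_x Q x = - ((Q + \<delta> * Sa Q x) * x / (Sa Q x * (U Q x)\<^sup>2))"

lemma Sa_pos: "Q \<noteq> 0 \<or> x \<noteq> 0 \<Longrightarrow> Sa Q x > 0"
  unfolding Sa_def by (simp add: sum_power2_gt_zero_iff)

lemma abs_le_Sa: "\<bar>Q\<bar> \<le> Sa Q x"
  unfolding Sa_def by (metis le_add_same_cancel1 real_sqrt_abs real_sqrt_le_iff zero_le_power2)

lemma Sa_strict_mono: "0 \<le> x \<Longrightarrow> x < y \<Longrightarrow> Sa Q x < Sa Q y"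
  unfolding Sa_def by (simp add: power_strict_mono)

lemma U_pos:
  assumes "Q \<noteq> 0 \<or> x \<noteq> 0"
  shows "U Q x > 0"
proof (cases "Q = 0")
  case True
  then show ?thesis
    using Sa_pos[OF assms] by (simp add: U_def)
next
  case False
  then have "\<bar>\<delta> * Q\<bar> < \<bar>Q\<bar>"
    using delta_bound by (simp add: abs_mult)
  then show ?thesis
    using abs_le_Sa[of Q x] by (simp add: U_def)
qed

lemma Sa_has_derivative:
  assumes "Q \<noteq> 0 \<or> x \<noteq> 0"
  shows "((\<lambda>p. Sa (fst p) (snd p)) has_derivative (\<lambda>h. (Q * fst h + x * snd h) / Sa Q x)) (at (Q, x))"
proof -
  have "Q\<^sup>2 + x\<^sup>2 > 0"
    using assms by (simp add: sum_power2_gt_zero_iff)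
  then show ?thesis
    unfolding Sa_def
    by (auto intro!: derivative_eq_intros simp: fun_eq_iff field_split_simps)
qed

lemma phi_derivative_identity:
  fixes S u Q x a b :: real
  assumes "S \<noteq> 0" "u \<noteq> 0" "u = S + \<delta> * Q"
  shows "(Q * a + x * b) / S - (\<delta> * a * ln u + \<delta> * Q * (((Q * a + x * b) / S + \<delta> * a) / u))
     = ((1 - \<delta>\<^sup>2) * Q / u - \<delta> * ln u) * a + x / u * b"
  using assms(1,2) by (simp add: field_simps power2_eq_square) (simp add: assms(3) algebra_simps power2_eq_square)

lemma phi_has_derivative:
  assumes "x > 0"
  shows "((\<lambda>p. phi (fst p) (snd p)) has_derivative (\<lambda>h. psi Q x * fst h + x / U Q x * snd h)) (at (Q, x))"
proof -
  have "Sa Q x > 0" "U Q x > 0"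
    using assms Sa_pos U_pos by auto
  have dSa: "((\<lambda>p. Sa (fst p) (snd p)) has_derivative (\<lambda>h. (Q * fst h + x * snd h) / Sa Q x)) (at (Q, x))"
    using assms by (intro Sa_has_derivative) simp
  have "((\<lambda>p. phi (fst p) (snd p)) has_derivative
     (\<lambda>h. (Q * fst h + x * snd h) / Sa Q x
        - (\<delta> * fst h * ln (U Q x) + \<delta> * Q * (((Q * fst h + x * snd h) / Sa Q x + \<delta> * fst h) / U Q x)))) (at (Q, x))"
    unfolding phi_def U_def using \<open>U Q x > 0\<close>
    by (auto intro!: derivative_eq_intros dSa simp: U_def divide_inverse)
  then show ?thesis
    by (rule has_derivative_eq_rhs)
      (use phi_derivative_identity[OF _ _ U_def] \<open>Sa Q x > 0\<close> \<open>U Q x > 0\<close> in \<open>auto simp: fun_eq_iff psi_def\<close>)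
qed

lemma psi_derivative_identity:
  fixes S u Q x a b :: real
  assumes "S \<noteq> 0" "u \<noteq> 0" "u = S + \<delta> * Q"
  shows "(1 - \<delta>\<^sup>2) * a / u - (1 - \<delta>\<^sup>2) * Q * ((Q * a + x * b) / S + \<delta> * a) / u\<^sup>2
       - \<delta> * (((Q * a + x * b) / S + \<delta> * a) / u)
     = ((1 - \<delta>\<^sup>2) / u - (Q + \<delta> * S)\<^sup>2 / (S * u\<^sup>2)) * a + (- ((Q + \<delta> * S) * x / (S * u\<^sup>2))) * b"
  using assms(1,2) by (simp add: field_simps power2_eq_square) (simp add: assms(3) algebra_simps power2_eq_square)

lemma psi_has_derivative:
  assumes "x > 0"
  shows "((\<lambda>p. psi (fst p) (snd p)) has_derivative (\<lambda>h. psi_Q Q x * fst h + psi_x Q x * snd h)) (at (Q, x))"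
proof -
  have "Sa Q x > 0" "U Q x > 0"
    using assms Sa_pos U_pos by auto
  have dSa: "((\<lambda>p. Sa (fst p) (snd p)) has_derivative (\<lambda>h. (Q * fst h + x * snd h) / Sa Q x)) (at (Q, x))"
    using assms by (intro Sa_has_derivative) simp
  have "((\<lambda>p. psi (fst p) (snd p)) has_derivative
     (\<lambda>h. (1 - \<delta>\<^sup>2) * fst h / U Q x - (1 - \<delta>\<^sup>2) * Q * ((Q * fst h + x * snd h) / Sa Q x + \<delta> * fst h) / (U Q x)\<^sup>2
       - \<delta> * (((Q * fst h + x * snd h) / Sa Q x + \<delta> * fst h) / U Q x))) (at (Q, x))"
    unfolding psi_def U_def using \<open>U Q x > 0\<close>
    by (auto intro!: derivative_eq_intros dSa simp: U_def divide_inverse power2_eq_square mult_ac)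
  then show ?thesis
    by (rule has_derivative_eq_rhs)
      (use psi_derivative_identity[OF _ _ U_def] \<open>Sa Q x > 0\<close> \<open>U Q x > 0\<close> in \<open>auto simp: fun_eq_iff psi_Q_def psi_x_def\<close>)
qed

lemma phi_has_real_derivative_x: "x > 0 \<Longrightarrow> (phi Q has_real_derivative x / U Q x) (at x)"
  by (rule has_real_derivative_partial2[OF phi_has_derivative])

lemma psi_has_real_derivative_x: "x > 0 \<Longrightarrow> (psi Q has_real_derivative psi_x Q x) (at x)"
  by (rule has_real_derivative_partial2[OF psi_has_derivative])

lemma continuous_on_phi: "continuous_on UNIV (phi Q)"
proof (cases "Q = 0")
  case True
  then show ?thesis
    unfolding phi_def Sa_def using continuous_on_rabs[OF continuous_on_id] by simp
next
  case False
  have "continuous_on UNIV (U Q)"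
    unfolding U_def Sa_def by (intro continuous_intros)
  moreover have "U Q x \<noteq> 0" for x
    using U_pos[of Q x] False by simp
  ultimately show ?thesis
    unfolding phi_def Sa_def by (intro continuous_intros) auto
qed

lemma phi_strict_mono:
  assumes "0 \<le> x" "x < y"
  shows "phi Q x < phi Q y"
proof (rule DERIV_pos_imp_increasing_open[OF assms(2)])
  fix t
  assume "x < t" "t < y"
  then have "t > 0"
    using assms by simp
  then show "\<exists>d. (phi Q has_real_derivative d) (at t) \<and> 0 < d"
    using phi_has_real_derivative_x U_pos by (auto intro!: exI[of _ "t / U Q t"])
qed (rule continuous_on_subset[OF continuous_on_phi subset_UNIV])

lemma phi_mono: "0 \<le> x \<Longrightarrow> x \<le> y \<Longrightarrow> phi Q x \<le> phi Q y"
  using phi_strict_mono by (cases "x = y") (auto simp: le_less)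

lemma psi_x_pos_iff: "x > 0 \<Longrightarrow> psi_x Q x > 0 \<longleftrightarrow> Q + \<delta> * Sa Q x < 0"
  using Sa_pos[of Q x] U_pos[of Q x] unfolding psi_x_def neg_0_less_iff_less
  by (auto simp: divide_less_0_iff mult_less_0_iff)

lemma psi_x_neg_iff: "x > 0 \<Longrightarrow> psi_x Q x < 0 \<longleftrightarrow> Q + \<delta> * Sa Q x > 0"
  using Sa_pos[of Q x] U_pos[of Q x] unfolding psi_x_def neg_less_0_iff_less
  by (auto simp: zero_less_divide_iff zero_less_mult_iff mult_less_0_iff)

lemma continuous_on_psi: "0 < x \<Longrightarrow> continuous_on {x..y} (psi Q)"
  by (intro continuous_at_imp_continuous_on ballI DERIV_isCont[OF psi_has_real_derivative_x]) auto

lemma psi_strict_mono: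
  assumes "0 < x" "x < y" and neg: "\<And>t. x < t \<Longrightarrow> t < y \<Longrightarrow> Q + \<delta> * Sa Q t < 0"
  shows "psi Q x < psi Q y"
proof (rule DERIV_pos_imp_increasing_open[OF assms(2)])
  fix t
  assume "x < t" "t < y"
  then have "t > 0" "psi_x Q t > 0"
    using assms psi_x_pos_iff by auto
  then show "\<exists>d. (psi Q has_real_derivative d) (at t) \<and> 0 < d"
    using psi_has_real_derivative_x[of t Q] by blast
qed (rule continuous_on_psi[OF \<open>0 < x\<close>])

lemma psi_strict_antimono:
  assumes "0 < x" "x < y" and pos: "\<And>t. x < t \<Longrightarrow> t < y \<Longrightarrow> Q + \<delta> * Sa Q t > 0"
  shows "psi Q y < psi Q x"
proof -
  have "- psi Q x < - psi Q y"
  proof (rule DERIV_pos_imp_increasing_open[OF assms(2)])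
    fix t
    assume "x < t" "t < y"
    then have "t > 0" "psi_x Q t < 0"
      using assms psi_x_neg_iff by auto
    then show "\<exists>d. ((\<lambda>t. - psi Q t) has_real_derivative d) (at t) \<and> 0 < d"
      using DERIV_minus[OF psi_has_real_derivative_x[of t Q]] by (intro exI[of _ "- psi_x Q t"]) simp
  qed (intro continuous_on_minus continuous_on_psi[OF \<open>0 < x\<close>])
  then show ?thesis
    by simp
qed

text \<open>Euler's relation for \<open>psi (t * Q) (t * x) = psi Q x - \<delta> * ln t\<close>.\<close>

lemma psi_euler:
  assumes "x > 0"
  shows "Q * psi_Q Q x + x * psi_x Q x = - \<delta>"
proof -
  define S where "S = Sa Q x"
  define K where "K = Q + \<delta> * S"
  have "S > 0" "U Q x > 0"
    using assms Sa_pos U_pos by (auto simp: S_def)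
  have "Q * K + x\<^sup>2 = S\<^sup>2 + \<delta> * Q * S"
    by (simp add: S_def K_def Sa_def algebra_simps power2_eq_square)
  also have "\<dots> = S * U Q x"
    by (simp add: S_def U_def algebra_simps power2_eq_square)
  finally have key: "Q * K + x\<^sup>2 = S * U Q x" .
  have "Q * psi_Q Q x + x * psi_x Q x = Q * (1 - \<delta>\<^sup>2) / U Q x - K * (Q * K + x\<^sup>2) / (S * (U Q x)\<^sup>2)"
    unfolding psi_Q_def psi_x_def S_def[symmetric] K_def[symmetric]
    by (simp add: power2_eq_square add_divide_distrib diff_divide_distrib algebra_simps)
  also have "\<dots> = (Q * (1 - \<delta>\<^sup>2) - K) / U Q x"
    unfolding key using \<open>S > 0\<close> \<open>U Q x > 0\<close> by (simp add: field_simps power2_eq_square)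
  also have "\<dots> = - \<delta>"
    using \<open>U Q x > 0\<close> by (simp add: K_def S_def U_def field_simps power2_eq_square)
  finally show ?thesis .
qed

lemma psi_strict_antimono_of_nonneg:
  assumes "\<delta> > 0" "0 \<le> Q" "0 < x" "x < y"
  shows "psi Q y < psi Q x"
proof (rule psi_strict_antimono[OF assms(3,4)])
  fix t
  assume "x < t"
  then show "Q + \<delta> * Sa Q t > 0"
    using assms Sa_pos[of Q t] by (simp add: add_nonneg_pos)
qed

lemma psi_strict_mono_of_far_neg:
  assumes "0 < x" "x < y" "y \<le> (1 - \<delta>) * - Q"
  shows "psi Q x < psi Q y"
proof (rule psi_strict_mono[OF assms(1,2)])
  fix t
  assume "x < t" "t < y"
  have "(1 - \<delta>) * - Q > 0"
    using assms by linarith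
  then have "Q < 0"
    using delta_bound by (simp add: mult_less_0_iff abs_less_iff)
  show "Q + \<delta> * Sa Q t < 0"
  proof (cases "\<delta> > 0")
    case True
    have "\<delta> * Sa Q t \<le> \<delta> * (- Q + t)"
      using True \<open>Q < 0\<close> \<open>x < t\<close> assms(1) sqrt_sum_squares_le_sum_abs[of Q t]
      by (intro mult_left_mono) (auto simp: Sa_def)
    also have "\<dots> < \<delta> * (- Q + (1 - \<delta>) * - Q)"
      using True \<open>t < y\<close> assms(3) by (intro mult_strict_left_mono) auto
    also have "\<dots> = - Q + Q * (1 - \<delta>)\<^sup>2"
      by (simp add: algebra_simps power2_eq_square)
    also have "\<dots> \<le> - Q"
      using \<open>Q < 0\<close> by (simp add: mult_nonpos_nonneg)
    finally show ?thesis
      by simp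
  next
    case False
    then have "\<delta> * Sa Q t \<le> 0"
      using Sa_pos[of Q t] \<open>Q < 0\<close> by (simp add: mult_nonpos_nonneg)
    with \<open>Q < 0\<close> show ?thesis
      by simp
  qed
qed

lemma psi_Q_less_of_psi_eq:
  assumes "\<delta> > 0" "Q < 0" "0 < x" "x < y" and eq: "psi Q x = psi Q y"
  shows "psi_Q Q y < psi_Q Q x"
proof -
  have K_mono: "Q + \<delta> * Sa Q s < Q + \<delta> * Sa Q t" if "0 \<le> s" "s < t" for s t
    using Sa_strict_mono[OF that] \<open>\<delta> > 0\<close> by simp
  have "Q + \<delta> * Sa Q y > 0"
  proof (rule ccontr)
    assume "\<not> Q + \<delta> * Sa Q y > 0"
    have "psi Q x < psi Q y"
    proof (rule psi_strict_mono[OF \<open>0 < x\<close> \<open>x < y\<close>])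
      fix t
      assume "x < t" "t < y"
      with K_mono[of t y] \<open>0 < x\<close> \<open>\<not> Q + \<delta> * Sa Q y > 0\<close> show "Q + \<delta> * Sa Q t < 0"
        by linarith
    qed
    with eq show False
      by simp
  qed
  moreover have "Q + \<delta> * Sa Q x < 0"
  proof (rule ccontr)
    assume "\<not> Q + \<delta> * Sa Q x < 0"
    have "psi Q y < psi Q x"
    proof (rule psi_strict_antimono[OF \<open>0 < x\<close> \<open>x < y\<close>])
      fix t
      assume "x < t" "t < y"
      with K_mono[of x t] \<open>0 < x\<close> \<open>\<not> Q + \<delta> * Sa Q x < 0\<close> show "Q + \<delta> * Sa Q t > 0"
        by linarith
    qed
    with eq show False
      by simp
  qed
  ultimately have "x * psi_x Q x > 0" "y * psi_x Q y < 0"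
    using assms psi_x_pos_iff psi_x_neg_iff by (auto simp: mult_pos_neg)
  then have "Q * psi_Q Q x < Q * psi_Q Q y"
    using psi_euler[of x Q] psi_euler[of y Q] assms by linarith
  then show ?thesis
    using \<open>Q < 0\<close> by simp
qed

lemma sgn_phi_diff: "0 \<le> x \<Longrightarrow> 0 \<le> y \<Longrightarrow> sgn (phi Q x - phi Q y) = sgn (x - y)"
  using phi_strict_mono[of x y Q] phi_strict_mono[of y x Q] by (cases x y rule: linorder_cases) auto

end

locale pnp_zero_current = pnp_delta +
  fixes l r \<alpha> \<beta> :: real
  assumes l_pos: "l > 0" and r_pos: "r > 0" and alpha_pos: "0 < \<alpha>" and beta_less_1: "\<beta> < 1"
begin

abbreviation B :: "real \<Rightarrow> real" where
  "B \<equiv> Bpnp l r \<alpha> \<beta>"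

abbreviation A_M :: real where
  "A_M \<equiv> AMpnp l r \<alpha> \<beta>"

definition kappa :: real where
  "kappa = (1 - \<beta>) / \<alpha>"

lemma kappa_pos: "kappa > 0"
  using alpha_pos beta_less_1 by (simp add: kappa_def)

lemma B_eq: "B a = kappa * (l - a) + r"
  by (simp add: Bpnp_def kappa_def)

lemma B_A_M: "B A_M = 0"
  using alpha_pos beta_less_1 by (simp add: Bpnp_def AMpnp_def field_simps)

lemma l_less_A_M: "l < A_M"
  using alpha_pos beta_less_1 r_pos by (simp add: AMpnp_def)

lemma A_M_pos: "A_M > 0"
  using l_less_A_M l_pos by simp

lemma B_pos: "a < A_M \<Longrightarrow> B a > 0"
  using B_A_M kappa_pos by (simp add: B_eq algebra_simps)

lemma B_antimono: "a \<le> b \<Longrightarrow> B b \<le> B a"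
  using kappa_pos by (simp add: B_eq mult_left_mono)

lemma B_has_real_derivative: "(B has_real_derivative - kappa) (at a)"
  unfolding B_eq[abs_def] by (auto intro!: derivative_eq_intros)

definition F :: "real \<Rightarrow> real \<Rightarrow> real" where
  "F Q a = a - l + phi Q a - phi Q (B a)"

lemma G2_eq_minus_F:
  assumes "0 < a" "a < A_M"
  shows "G2 l r \<alpha> \<beta> Q a \<delta> = - F Q a"
proof -
  have "U Q a > 0" "U Q (B a) > 0"
    using assms U_pos[of Q a] U_pos[of Q "B a"] B_pos[of a] by auto
  have "G2 l r \<alpha> \<beta> Q a \<delta> = \<delta> * Q * ln (U Q a / U Q (B a)) - (a - l + Sa Q a - Sa Q (B a))"
    by (simp add: G2_def Npnp_def Sb_def Sa_def U_def)
  also have "\<dots> = - F Q a"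
    using \<open>U Q a > 0\<close> \<open>U Q (B a) > 0\<close> by (simp add: ln_div F_def phi_def algebra_simps)
  finally show ?thesis .
qed

lemma F_expanding:
  assumes "0 \<le> a" "a \<le> b" "b \<le> A_M"
  shows "b - a \<le> F Q b - F Q a"
proof -
  have "0 \<le> B b"
    using assms B_pos B_A_M by (cases "b = A_M") (auto simp: less_eq_real_def)
  then have "phi Q (B b) \<le> phi Q (B a)"
    using phi_mono B_antimono[OF assms(2)] by blast
  moreover have "phi Q a \<le> phi Q b"
    using phi_mono assms by blast
  ultimately show ?thesis
    by (simp add: F_def)
qed

lemma F_at_0: "F Q 0 \<le> - l"
  using phi_mono[of 0 "B 0" Q] B_pos[OF A_M_pos] by (simp add: F_def)

lemma F_at_A_M: "A_M - l \<le> F Q A_M"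
  using phi_mono[of 0 A_M Q] A_M_pos by (simp add: F_def B_A_M)

lemma continuous_on_F: "continuous_on S (F Q)"
proof -
  have "continuous_on S B"
    unfolding B_eq[abs_def] by (intro continuous_intros)
  then show ?thesis
    unfolding F_def[abs_def]
    by (intro continuous_intros continuous_on_compose2[OF continuous_on_phi]) auto
qed

lemma F_eq_ex1:
  assumes "- l < y" "y < A_M - l"
  shows "\<exists>!a. 0 < a \<and> a < A_M \<and> F Q a = y"
proof -
  obtain a where a: "0 \<le> a" "a \<le> A_M" "F Q a = y"
    using IVT'[of "F Q" 0 y A_M] F_at_0[of Q] F_at_A_M[of Q] assms l_less_A_M l_pos continuous_on_F
    by force
  moreover have "a \<noteq> 0" "a \<noteq> A_M"
    using a F_at_0[of Q] F_at_A_M[of Q] assms by auto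
  moreover have "b = a" if "0 < b" "b < A_M" "F Q b = y" for b
    using F_expanding[of a b Q] F_expanding[of b a Q] a that by (cases a b rule: linorder_cases) auto
  ultimately show ?thesis
    by (intro ex1I[of _ a]) auto
qed

definition F_solution :: "real \<Rightarrow> real \<Rightarrow> real" where
  "F_solution Q y = (THE a. 0 < a \<and> a < A_M \<and> F Q a = y)"

lemma F_solution:
  assumes "- l < y" "y < A_M - l"
  shows "0 < F_solution Q y" "F_solution Q y < A_M" "F Q (F_solution Q y) = y"
  using theI'[OF F_eq_ex1[OF assms]] unfolding F_solution_def by auto

lemma Asol_eq_F_solution: "Asol l r \<alpha> \<beta> Q \<delta> = F_solution Q 0"
  using G2_eq_minus_F unfolding Asol_def F_solution_def by (metis neg_equal_0_iff_equal)

lemma F_expanding_abs: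
  assumes "0 \<le> a" "a \<le> A_M" "0 \<le> b" "b \<le> A_M"
  shows "\<bar>a - b\<bar> \<le> \<bar>F Q a - F Q b\<bar>"
  using F_expanding[of a b Q] F_expanding[of b a Q] assms by (cases "a \<le> b") auto

definition F_Q :: "real \<Rightarrow> real \<Rightarrow> real" where
  "F_Q Q a = psi Q a - psi Q (B a)"

definition F_a :: "real \<Rightarrow> real \<Rightarrow> real" where
  "F_a Q a = 1 + a / U Q a + kappa * (B a / U Q (B a))"

lemma F_a_pos:
  assumes "0 < a" "a < A_M"
  shows "F_a Q a > 0"
  using assms U_pos[of Q a] U_pos[of Q "B a"] B_pos[of a] kappa_pos
  by (simp add: F_a_def add_pos_nonneg)

lemma F_has_derivative:
  assumes "0 < a" "a < A_M"
  shows "((\<lambda>p. F (fst p) (snd p)) has_derivative (\<lambda>h. F_Q Q a * fst h + F_a Q a * snd h)) (at (Q, a))"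
proof -
  have inner: "((\<lambda>p. (fst p, B (snd p))) has_derivative (\<lambda>h. (fst h, - kappa * snd h))) (at (Q, a))"
    unfolding B_eq by (auto intro!: derivative_eq_intros)
  have outer: "((\<lambda>p. phi (fst p) (snd p)) has_derivative
      (\<lambda>h. psi Q (B a) * fst h + B a / U Q (B a) * snd h)) (at ((\<lambda>p. (fst p, B (snd p))) (Q, a)))"
    using phi_has_derivative[OF B_pos[OF assms(2)]] by simp
  from has_derivative_compose[OF inner outer]
  have "((\<lambda>p. phi (fst p) (B (snd p))) has_derivative
      (\<lambda>h. psi Q (B a) * fst h + B a / U Q (B a) * (- kappa * snd h))) (at (Q, a))"
    by simp
  then show ?thesis
    unfolding F_def using phi_has_derivative[OF assms(1)]
    by (auto intro!: derivative_eq_intros simp: F_Q_def F_a_def algebra_simps)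
qed

lemma continuous_F_solution:
  assumes "- l < y" "y < A_M - l"
  shows "continuous (at (Q, y)) (\<lambda>p. F_solution (fst p) (snd p))"
proof -
  define a where "a = F_solution Q y"
  have a: "0 < a" "a < A_M" "F Q a = y"
    using F_solution[OF assms] by (auto simp: a_def)
  have "isCont (\<lambda>p. F (fst p) (snd p)) (Q, a)"
    using F_has_derivative[OF a(1,2)] by (rule has_derivative_continuous)
  moreover have "((\<lambda>p. (fst p, a)) \<longlongrightarrow> (Q, a)) (at (Q, y))"
    by (auto intro!: tendsto_eq_intros)
  ultimately have "((\<lambda>p. F (fst p) a) \<longlongrightarrow> F Q a) (at (Q, y))"
    by (auto dest: isCont_tendsto_compose)
  then have "((\<lambda>p. snd p - F (fst p) a) \<longlongrightarrow> y - F Q a) (at (Q, y))"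
    by (auto intro!: tendsto_eq_intros)
  then have lim: "((\<lambda>p. \<bar>snd p - F (fst p) a\<bar>) \<longlongrightarrow> 0) (at (Q, y))"
    using tendsto_rabs a(3) by fastforce
  have "\<forall>\<^sub>F p in at (Q, y). norm (F_solution (fst p) (snd p) - a) \<le> \<bar>snd p - F (fst p) a\<bar>"
  proof (rule eventually_at_topological[THEN iffD2], intro exI conjI ballI impI)
    show "open (UNIV \<times> {- l<..<A_M - l})" "(Q, y) \<in> UNIV \<times> {- l<..<A_M - l}"
      using assms by (auto intro: open_Times)
    fix p :: "real \<times> real"
    assume "p \<in> UNIV \<times> {- l<..<A_M - l}"
    then have "- l < snd p" "snd p < A_M - l"
      by auto
    from F_solution[OF this, of "fst p"] a
    show "norm (F_solution (fst p) (snd p) - a) \<le> \<bar>snd p - F (fst p) a\<bar>"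
      using F_expanding_abs[of "F_solution (fst p) (snd p)" a "fst p"] by simp
  qed
  from Lim_null_comparison[OF this lim]
  have "((\<lambda>p. F_solution (fst p) (snd p) - a) \<longlongrightarrow> 0) (at (Q, y))" .
  then show ?thesis
    unfolding continuous_at by (simp add: a_def LIM_zero_iff)
qed

abbreviation A :: "real \<Rightarrow> real" where
  "A Q \<equiv> Asol l r \<alpha> \<beta> Q \<delta>"

lemma A_bounds: "0 < A Q" "A Q < A_M" "F Q (A Q) = 0"
  using F_solution[of 0 Q] l_pos l_less_A_M by (simp_all add: Asol_eq_F_solution)

definition dA :: "real \<Rightarrow> real" where
  "dA Q = - F_Q Q (A Q) / F_a Q (A Q)"

lemma A_has_real_derivative: "((\<lambda>q. A q) has_real_derivative dA Q) (at Q)"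
proof -
  let ?T = "{- l<..<A_M - l}"
  have "0 \<in> ?T"
    using l_pos l_less_A_M by auto
  then have "((\<lambda>q. F_solution q 0) has_real_derivative - F_Q Q (F_solution Q 0) / F_a Q (F_solution Q 0)) (at Q)"
  proof (rule implicit_function_has_real_derivative[OF open_greaterThanLessThan])
    show "F q (F_solution q z) = z" if "z \<in> ?T" for q z
      using F_solution that by simp
    show "isCont (\<lambda>p. F_solution (fst p) (snd p)) (Q, 0)"
      using continuous_F_solution \<open>0 \<in> ?T\<close> by simp
    show "((\<lambda>p. F (fst p) (snd p)) has_derivative
        (\<lambda>h. F_Q Q (F_solution Q 0) * fst h + F_a Q (F_solution Q 0) * snd h)) (at (Q, F_solution Q 0))"
      using F_has_derivative F_solution \<open>0 \<in> ?T\<close> by simp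
    show "F_a Q (F_solution Q 0) \<noteq> 0"
      using F_a_pos F_solution \<open>0 \<in> ?T\<close> by (simp add: less_imp_neq[symmetric])
  qed
  then show ?thesis
    by (simp add: dA_def Asol_eq_F_solution)
qed

lemma sgn_dA: "sgn (dA Q) = - sgn (F_Q Q (A Q))"
  using F_a_pos[OF A_bounds(1,2)] by (simp add: dA_def)

lemma sgn_A_minus_B: "sgn (A Q - B (A Q)) = sgn (l - r)"
proof -
  define a where "a = A Q"
  have "0 < a" "0 < B a"
    using A_bounds B_pos by (auto simp: a_def)
  have "phi Q a - phi Q (B a) = l - a"
    using A_bounds(3)[of Q] by (simp add: F_def a_def)
  then have "sgn (a - B a) = sgn (l - a)"
    using sgn_phi_diff[of a "B a" Q] \<open>0 < a\<close> \<open>0 < B a\<close> by simp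
  moreover have "l - r = (1 + kappa) * (l - a) + (a - B a)"
    by (simp add: B_eq algebra_simps)
  ultimately have "sgn (l - r) = sgn (l - a)"
    using sgn_add_scaled_same_sign[of "1 + kappa" "a - B a" "l - a"] kappa_pos by simp
  with \<open>sgn (a - B a) = sgn (l - a)\<close> show ?thesis
    by (simp add: a_def)
qed

definition lo :: "real \<Rightarrow> real" where
  "lo Q = min (A Q) (B (A Q))"

definition hi :: "real \<Rightarrow> real" where
  "hi Q = max (A Q) (B (A Q))"

lemma lo_hi:
  assumes "l \<noteq> r"
  shows "0 < lo Q" "lo Q < hi Q" "hi Q < A_M + B 0"
proof -
  have "A Q \<noteq> B (A Q)"
    using sgn_A_minus_B[of Q] assms by (auto simp: sgn_0_0)
  moreover have "B (A Q) \<le> B 0" "0 < B 0"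
    using B_antimono A_bounds B_pos[OF A_M_pos] by (auto simp: less_imp_le)
  ultimately show "0 < lo Q" "lo Q < hi Q" "hi Q < A_M + B 0"
    using A_bounds[of Q] B_pos[OF A_bounds(2)] A_M_pos by (auto simp: lo_def hi_def)
qed

lemma sgn_mult_diff_A_B:
  assumes "l \<noteq> r"
  shows "sgn (l - r) * (g (A Q) - g (B (A Q))) = g (hi Q) - g (lo Q)"
  using sgn_A_minus_B[of Q] assms
  by (cases "A Q" "B (A Q)" rule: linorder_cases) (auto simp: lo_def hi_def sgn_real_def split: if_splits)

definition V :: "real \<Rightarrow> real" where
  "V Q = sgn (l - r) * F_Q Q (A Q)"

lemma V_eq: "l \<noteq> r \<Longrightarrow> V Q = psi Q (hi Q) - psi Q (lo Q)"
  using sgn_mult_diff_A_B[of "psi Q"] by (simp add: V_def F_Q_def)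

lemma V_has_real_derivative:
  "(V has_real_derivative sgn (l - r) * ((psi_Q Q (A Q) + psi_x Q (A Q) * dA Q)
     - (psi_Q Q (B (A Q)) + psi_x Q (B (A Q)) * (- kappa * dA Q)))) (at Q)"
proof -
  have "((\<lambda>q. B (A q)) has_real_derivative - kappa * dA Q) (at Q)"
    using DERIV_chain2[OF B_has_real_derivative A_has_real_derivative] by simp
  then have "((\<lambda>q. psi q (B (A q))) has_real_derivative
      psi_Q Q (B (A Q)) + psi_x Q (B (A Q)) * (- kappa * dA Q)) (at Q)"
    by (intro has_real_derivative_graph psi_has_derivative B_pos A_bounds)
  moreover have "((\<lambda>q. psi q (A q)) has_real_derivative psi_Q Q (A Q) + psi_x Q (A Q) * dA Q) (at Q)"
    by (intro has_real_derivative_graph psi_has_derivative A_bounds A_has_real_derivative)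
  ultimately show ?thesis
    unfolding V_def[abs_def] F_Q_def by (intro DERIV_cmult DERIV_diff)
qed

lemma continuous_on_V: "continuous_on UNIV V"
  using V_has_real_derivative by (intro continuous_at_imp_continuous_on ballI DERIV_isCont) blast

context
  assumes delta_pos: "\<delta> > 0" and l_neq_r: "l \<noteq> r"
begin

lemma V_neg_of_nonneg: "0 \<le> Q \<Longrightarrow> V Q < 0"
  using psi_strict_antimono_of_nonneg[OF delta_pos] lo_hi[OF l_neq_r] V_eq[OF l_neq_r] by simp

lemma V_pos_of_far_neg:
  assumes "Q \<le> - (A_M + B 0) / (1 - \<delta>)"
  shows "V Q > 0"
proof -
  have "hi Q \<le> (1 - \<delta>) * - Q"
    using assms lo_hi[OF l_neq_r, of Q] delta_bound by (simp add: field_simps)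
  then show ?thesis
    using psi_strict_mono_of_far_neg lo_hi[OF l_neq_r] V_eq[OF l_neq_r] by simp
qed

lemma V_down_crossing:
  assumes "V Q = 0"
  shows "\<exists>D<0. (V has_real_derivative D) (at Q)"
proof -
  have "Q < 0"
    using V_neg_of_nonneg[of Q] assms by (cases "0 \<le> Q") auto
  have "F_Q Q (A Q) = 0"
    using assms l_neq_r by (simp add: V_def sgn_0_0)
  then have "dA Q = 0"
    by (simp add: dA_def)
  then have "(V has_real_derivative psi_Q Q (hi Q) - psi_Q Q (lo Q)) (at Q)"
    using V_has_real_derivative[of Q] sgn_mult_diff_A_B[OF l_neq_r, of "psi_Q Q" Q] by simp
  moreover have "psi Q (lo Q) = psi Q (hi Q)"
    using assms V_eq[OF l_neq_r] by simp
  then have "psi_Q Q (hi Q) - psi_Q Q (lo Q) < 0"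
    using psi_Q_less_of_psi_eq[OF delta_pos \<open>Q < 0\<close>] lo_hi[OF l_neq_r] by simp
  ultimately show ?thesis
    by blast
qed

end

lemma deriv_A: "deriv (\<lambda>q. A q) Q = dA Q"
  by (rule DERIV_imp_deriv[OF A_has_real_derivative])

lemma sgn_deriv_A_eq_V:
  assumes "l \<noteq> r"
  shows "sgn (deriv (\<lambda>q. A q) Q) = - sgn (l - r) * sgn (V Q)"
proof -
  have "sgn (l - r) * sgn (l - r) = 1"
    using assms by (auto simp: sgn_real_def)
  then show ?thesis
    by (simp add: deriv_A sgn_dA V_def sgn_mult mult.assoc[symmetric])
qed

lemma deriv_A_sign_change_of_pos:
  assumes "\<delta> > 0"
  shows "\<exists>Qm<0. \<forall>Q0. (Q0 > Qm \<longrightarrow> sgn (deriv (\<lambda>q. A q) Q0) = sgn (l - r)) \<and>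
                     (Q0 < Qm \<longrightarrow> sgn (deriv (\<lambda>q. A q) Q0) = - sgn (l - r))"
proof (cases "l = r")
  case True
  then have "A Q = B (A Q)" for Q
    using sgn_A_minus_B[of Q] by (simp add: sgn_0_0)
  then have "deriv (\<lambda>q. A q) Q = 0" for Q
    by (simp add: deriv_A dA_def F_Q_def)
  with True show ?thesis
    by (intro exI[of _ "-1"]) auto
next
  case False
  define Q1 where "Q1 = - (A_M + B 0) / (1 - \<delta>)"
  have "Q1 < 0"
    using A_M_pos B_pos[OF A_M_pos] delta_bound by (simp add: Q1_def divide_neg_pos)
  have "V Q1 > 0"
    using V_pos_of_far_neg[OF assms False] by (simp add: Q1_def)
  have "V 0 < 0"
    using V_neg_of_nonneg[OF assms False] by simp
  obtain z where "z \<in> {Q1<..<0}" and z: "\<forall>x. (z < x \<longrightarrow> V x < 0) \<and> (x < z \<longrightarrow> V x > 0)"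
    using sign_change_unique[OF continuous_on_V V_down_crossing[OF assms False] \<open>Q1 < 0\<close> \<open>V Q1 > 0\<close> \<open>V 0 < 0\<close>]
    by blast
  have "sgn (deriv (\<lambda>q. A q) Q0) = sgn (l - r)" if "z < Q0" for Q0
    using z that sgn_deriv_A_eq_V[OF False, of Q0] by simp
  moreover have "sgn (deriv (\<lambda>q. A q) Q0) = - sgn (l - r)" if "Q0 < z" for Q0
    using z that sgn_deriv_A_eq_V[OF False, of Q0] by simp
  ultimately show ?thesis
    using \<open>z \<in> {Q1<..<0}\<close> by auto
qed

lemma deriv_A_sign_change_of_neg:
  assumes "\<delta> < 0"
  shows "\<exists>Qp>0. \<forall>Q0. (Q0 < Qp \<longrightarrow> sgn (deriv (\<lambda>q. A q) Q0) = - sgn (l - r)) \<and>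
                     (Q0 > Qp \<longrightarrow> sgn (deriv (\<lambda>q. A q) Q0) = sgn (l - r))"
proof -
  interpret reflected: pnp_zero_current "- \<delta>" l r \<alpha> \<beta>
    using delta_bound l_pos r_pos alpha_pos beta_less_1 by unfold_locales auto
  have "- \<delta> > 0"
    using assms by simp
  then obtain Qm where "Qm < 0"
    and Qm: "\<forall>Q0. (Q0 > Qm \<longrightarrow> sgn (deriv (\<lambda>q. reflected.A q) Q0) = sgn (l - r)) \<and>
      (Q0 < Qm \<longrightarrow> sgn (deriv (\<lambda>q. reflected.A q) Q0) = - sgn (l - r))"
    using reflected.deriv_A_sign_change_of_pos by blast
  have reflect: "deriv (\<lambda>q. A q) Q0 = - deriv (\<lambda>q. reflected.A q) (- Q0)" for Q0
  proof -
    have "((\<lambda>q. reflected.A (- q)) has_real_derivative reflected.dA (- Q0) * - 1) (at Q0)"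
      by (rule DERIV_chain2[OF reflected.A_has_real_derivative]) (auto intro!: derivative_eq_intros)
    then show ?thesis
      using Asol_reflect[of l r \<alpha> \<beta> _ \<delta>] by (simp add: DERIV_imp_deriv reflected.deriv_A)
  qed
  have "sgn (deriv (\<lambda>q. A q) Q0) = - sgn (l - r)" if "Q0 < - Qm" for Q0
    using Qm that by (simp add: reflect)
  moreover have "sgn (deriv (\<lambda>q. A q) Q0) = sgn (l - r)" if "Q0 > - Qm" for Q0
    using Qm that by (simp add: reflect)
  ultimately show ?thesis
    using \<open>Qm < 0\<close> by (intro exI[of _ "- Qm"]) auto
qed

end

theorem theorem3p6:
  fixes l r \<alpha> \<beta> D1 D2 \<delta> :: real
  assumes "l > 0" and "r > 0"
    and "0 < \<alpha>" and "\<alpha> < \<beta>" and "\<beta> < 1"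
    and "D1 > 0" and "D2 > 0"
    and "\<delta> = (D2 - D1) / (D2 + D1)"
  shows "(D1 < D2 \<longrightarrow>
           (\<exists>Qm < 0. \<forall>Q0.
              (Q0 > Qm \<longrightarrow> sgn (deriv (\<lambda>q. Asol l r \<alpha> \<beta> q \<delta>) Q0) = sgn (l - r)) \<and>
              (Q0 < Qm \<longrightarrow> sgn (deriv (\<lambda>q. Asol l r \<alpha> \<beta> q \<delta>) Q0) = - sgn (l - r))))
       \<and> (D1 > D2 \<longrightarrow>
           (\<exists>Qp > 0. \<forall>Q0.
              (Q0 < Qp \<longrightarrow> sgn (deriv (\<lambda>q. Asol l r \<alpha> \<beta> q \<delta>) Q0) = - sgn (l - r)) \<and>
              (Q0 > Qp \<longrightarrow> sgn (deriv (\<lambda>q. Asol l r \<alpha> \<beta> q \<delta>) Q0) = sgn (l - r))))"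
proof -
  have "\<bar>D2 - D1\<bar> < D2 + D1"
    using assms(6,7) by (simp add: abs_less_iff)
  then have "\<bar>\<delta>\<bar> < 1"
    using assms(6-8) by simp
  then interpret pnp_zero_current \<delta> l r \<alpha> \<beta>
    using assms(1,2,3,5) by unfold_locales
  have "D1 < D2 \<longleftrightarrow> \<delta> > 0" "D2 < D1 \<longleftrightarrow> \<delta> < 0"
    using assms(6-8) by (simp_all add: zero_less_divide_iff divide_less_0_iff)
  with deriv_A_sign_change_of_pos deriv_A_sign_change_of_neg show ?thesis
    by simp
qed

end
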